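(* Assume (F1)–(F3) and let $f_0\in C^1([0,1])$ be non-increasing with $f_0(w)\le f(w)$ for $0\le w\le1$, $f_0(0)>1$, $f_0(1)=0$, and such that $1-w=f_0(w)$ has exactly one solution in $(0,1)$. Let $c^{(0)}$ be the unique value of $c$ for which the non-delayed problem $w''+cw'+w(1-w-f_0(w))=0$, $w(-\infty)=1$, $w(+\infty)=0$ has a solution. If, for some $\tau\ge0$ and some $c>0$, problem (P) has a monotonically decreasing solution, then $c\le c^{(0)}$.
   Context: $f:\mathbb R\to\mathbb R$ is $C^4$ with bounded derivatives and satisfies: (F1) $f(w)>0$ for $0\le w<1$, $f(1)=0$, $f'(1)>-1$; (F2) $f(0)>1$, $f'(0)>0$, and $f(w)>1$ for $0\le w<w_*$ for some $w_*\in(0,1)$; (F3) the equation $f(w)=1-w$ has exactly one solution $w_0$ in $(0,1)$, and $f'(w_0)<-1$. Problem (P) for given $\tau\ge0$, $c\in\mathbb R$: find $w\in C^2(\mathbb R)$ with $w''(x)+cw'(x)+w(x)\big(1-w(x)-f(w(x+c\tau))\big)=0$ for all $x$, and $w(-\infty)=1$, $w(+\infty)=0$. *)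

theory Defs
  imports "HOL-Analysis.Analysis"
begin

definition C2_real :: "(real \<Rightarrow> real) \<Rightarrow> bool" where
  "C2_real w \<longleftrightarrow> w differentiable_on UNIV \<and> (deriv w) differentiable_on UNIV
     \<and> continuous_on UNIV (deriv (deriv w))"

definition C4_bounded_derivs :: "(real \<Rightarrow> real) \<Rightarrow> bool" where
  "C4_bounded_derivs f \<longleftrightarrow>
     (\<forall>k<4. ((deriv ^^ k) f) differentiable_on UNIV) \<and>
     continuous_on UNIV ((deriv ^^ 4) f) \<and>
     (\<forall>k\<in>{1..4::nat}. bounded (range ((deriv ^^ k) f)))"

definition F1 :: "(real \<Rightarrow> real) \<Rightarrow> bool" where
  "F1 f \<longleftrightarrow> (\<forall>w. 0 \<le> w \<and> w < 1 \<longrightarrow> f w > 0) \<and> f 1 = 0 \<and> deriv f 1 > -1"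

definition F2 :: "(real \<Rightarrow> real) \<Rightarrow> bool" where
  "F2 f \<longleftrightarrow> f 0 > 1 \<and> deriv f 0 > 0 \<and>
     (\<exists>ws. 0 < ws \<and> ws < 1 \<and> (\<forall>w. 0 \<le> w \<and> w < ws \<longrightarrow> f w > 1))"

definition F3 :: "(real \<Rightarrow> real) \<Rightarrow> bool" where
  "F3 f \<longleftrightarrow> (\<exists>!w0. 0 < w0 \<and> w0 < 1 \<and> f w0 = 1 - w0) \<and>
     (\<forall>w0. 0 < w0 \<and> w0 < 1 \<and> f w0 = 1 - w0 \<longrightarrow> deriv f w0 < -1)"

definition solves_P :: "(real \<Rightarrow> real) \<Rightarrow> real \<Rightarrow> real \<Rightarrow> (real \<Rightarrow> real) \<Rightarrow> bool" where
  "solves_P f \<tau> c w \<longleftrightarrow> C2_real w \<and>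
     (\<forall>x. deriv (deriv w) x + c * deriv w x + w x * (1 - w x - f (w (x + c * \<tau>))) = 0) \<and>
     (w \<longlongrightarrow> 1) at_bot \<and> (w \<longlongrightarrow> 0) at_top"

text \<open>w solves the non-delayed problem with nonlinearity f0 (defined on [0,1]) and speed c;
  since f0 is only given on [0,1], solutions are required to take values in [0,1].\<close>
definition solves_nondelayed :: "(real \<Rightarrow> real) \<Rightarrow> real \<Rightarrow> (real \<Rightarrow> real) \<Rightarrow> bool" where
  "solves_nondelayed f0 c w \<longleftrightarrow> C2_real w \<and> (\<forall>x. 0 \<le> w x \<and> w x \<le> 1) \<and>
     (\<forall>x. deriv (deriv w) x + c * deriv w x + w x * (1 - w x - f0 (w x)) = 0) \<and>
     (w \<longlongrightarrow> 1) at_bot \<and> (w \<longlongrightarrow> 0) at_top"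

definition C1_on_unit :: "(real \<Rightarrow> real) \<Rightarrow> bool" where
  "C1_on_unit f0 \<longleftrightarrow> (\<exists>f0'. (\<forall>x\<in>{0..1}. (f0 has_real_derivative f0' x) (at x within {0..1}))
      \<and> continuous_on {0..1} f0')"

end

theory Submission
  imports Defs
begin

text \<open>Write \<open>g(u) = u (1 - u - f\<^sub>0(u))\<close>. Since \<open>f\<^sub>0 \<le> f\<close>, \<open>f\<^sub>0\<close> is non-increasing and
  \<open>w\<close> is decreasing with \<open>c \<tau> \<ge> 0\<close>, we have \<open>f(w(x + c\<tau>)) \<ge> f\<^sub>0(w(x + c\<tau>)) \<ge> f\<^sub>0(w(x))\<close>, so
  \<open>w\<close> is a subsolution: \<open>w'' + c w' + g(w) \<ge> 0\<close>. If \<open>c > c\<^sub>0\<close>, then \<open>w' \<le> 0\<close> makes \<open>w\<close> a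
  subsolution for speed \<open>c\<^sub>0\<close> as well, and we slide it against the wave \<open>v\<close> of speed \<open>c\<^sub>0\<close>:
  \<open>g\<close> is decreasing near \<open>0\<close> and near \<open>1\<close>, so the maximum principle puts every sufficiently
  shifted copy \<open>w(\<cdot> + s)\<close> below \<open>v\<close>, and the smallest such shift makes it touch \<open>v\<close> from
  below. Comparing derivatives at the contact point gives \<open>w' = 0\<close>, then \<open>v' = 0\<close> and
  \<open>g(v) = 0\<close> there; by uniqueness for the Lipschitz ODE \<open>v\<close> would be constant, contradicting
  its limits.\<close>

lemma DERIV_local_max_second:
  fixes d d' d'' :: "real \<Rightarrow> real"
  assumes d: "\<And>x. (d has_real_derivative d' x) (at x)"
    and d': "\<And>x. (d' has_real_derivative d'' x) (at x)"
    and e: "e > 0" and max: "\<And>y. \<bar>x0 - y\<bar> < e \<Longrightarrow> d y \<le> d x0"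
  shows "d' x0 = 0" and "d'' x0 \<le> 0"
proof -
  show crit: "d' x0 = 0" using DERIV_local_max[OF d e] max by blast
  show "d'' x0 \<le> 0"
  proof (rule ccontr)
    assume "\<not> d'' x0 \<le> 0"
    then obtain \<delta> where \<delta>: "\<delta> > 0" "\<And>h. h > 0 \<Longrightarrow> h < \<delta> \<Longrightarrow> d' x0 < d' (x0 + h)"
      using DERIV_pos_inc_right[OF d'] by (meson not_le)
    define h where "h = min e \<delta> / 2"
    have h: "h > 0" "h < e" "h < \<delta>" using e \<delta> by (auto simp: h_def)
    have "d x0 < d (x0 + h)"
    proof (rule DERIV_pos_imp_increasing_open[of x0 "x0 + h" d])
      show "\<exists>l. (d has_real_derivative l) (at y) \<and> l > 0" if "x0 < y" "y < x0 + h" for y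
        using d[of y] \<delta>(2)[of "y - x0"] crit that h by auto
      show "continuous_on {x0..x0 + h} d"
        using d by (meson DERIV_isCont continuous_at_imp_continuous_on)
    qed (use h in simp)
    with max[of "x0 + h"] h show False by simp
  qed
qed

text \<open>At an interior positive maximum of \<open>u - v\<close> the first derivatives agree and
  \<open>u'' \<le> v''\<close>, which forces \<open>g(u) \<ge> g(v)\<close> there.\<close>

lemma comparison_right:
  fixes u u' u'' v v' v'' g :: "real \<Rightarrow> real"
  assumes Du: "\<And>x. (u has_real_derivative u' x) (at x)" "\<And>x. (u' has_real_derivative u'' x) (at x)"
    and Dv: "\<And>x. (v has_real_derivative v' x) (at x)" "\<And>x. (v' has_real_derivative v'' x) (at x)"
    and sub: "\<And>x. x \<ge> a \<Longrightarrow> u'' x + c * u' x + g (u x) \<ge> 0"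
    and sol: "\<And>x. v'' x + c * v' x + g (v x) = 0"
    and start: "u a \<le> v a" and lim: "((\<lambda>x. u x - v x) \<longlongrightarrow> 0) at_top"
    and decreasing: "\<And>x. x \<ge> a \<Longrightarrow> u x > v x \<Longrightarrow> g (u x) < g (v x)"
    and "x \<ge> a"
  shows "u x \<le> v x"
proof (rule ccontr)
  assume "\<not> u x \<le> v x"
  define d where "d = (\<lambda>x. u x - v x)"
  have pos: "d x > 0" using \<open>\<not> u x \<le> v x\<close> by (simp add: d_def)
  have Dd: "\<And>y. (d has_real_derivative (u' y - v' y)) (at y)"
    unfolding d_def using Du(1) Dv(1) by (intro derivative_intros)
  have Dd': "\<And>y. ((\<lambda>y. u' y - v' y) has_real_derivative (u'' y - v'' y)) (at y)"
    using Du(2) Dv(2) by (intro derivative_intros)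
  have "\<forall>\<^sub>F y in at_top. d y < d x"
    using order_tendstoD(2)[OF lim[folded d_def] pos] .
  then obtain B where B: "\<And>y. y \<ge> B \<Longrightarrow> d y < d x"
    unfolding eventually_at_top_linorder by blast
  have "continuous_on {a..max B x} d"
    using Dd by (meson DERIV_isCont continuous_at_imp_continuous_on)
  then have "\<exists>x0\<in>{a..max B x}. \<forall>y\<in>{a..max B x}. d y \<le> d x0"
    using continuous_attains_sup[of "{a..max B x}" d] \<open>x \<ge> a\<close> by (simp add: le_max_iff_disj)
  then obtain x0 where x0: "x0 \<in> {a..max B x}" "\<forall>y \<in> {a..max B x}. d y \<le> d x0"
    by blast
  have ge: "d x \<le> d x0" using x0 \<open>x \<ge> a\<close> by auto
  have max: "d y \<le> d x0" if "y \<ge> a" for y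
    using x0(2) B[of y] ge that by (cases "y \<le> max B x") (auto simp: max_def split: if_split_asm)
  have "x0 > a" using x0(1) start ge pos by (cases "x0 = a") (auto simp: d_def)
  have "u' x0 - v' x0 = 0" "u'' x0 - v'' x0 \<le> 0"
    using DERIV_local_max_second[OF Dd Dd', of "x0 - a" x0] \<open>x0 > a\<close> max by auto
  with sub[of x0] sol[of x0] \<open>x0 > a\<close> have "g (u x0) \<ge> g (v x0)"
    by (auto simp: algebra_simps)
  moreover have "u x0 > v x0" using ge pos by (simp add: d_def)
  ultimately show False using decreasing[of x0] \<open>x0 > a\<close> by auto
qed

lemma comparison_left:
  fixes u u' u'' v v' v'' g :: "real \<Rightarrow> real"
  assumes Du: "\<And>x. (u has_real_derivative u' x) (at x)" "\<And>x. (u' has_real_derivative u'' x) (at x)"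
    and Dv: "\<And>x. (v has_real_derivative v' x) (at x)" "\<And>x. (v' has_real_derivative v'' x) (at x)"
    and sub: "\<And>x. x \<le> a \<Longrightarrow> u'' x + c * u' x + g (u x) \<ge> 0"
    and sol: "\<And>x. v'' x + c * v' x + g (v x) = 0"
    and start: "u a \<le> v a" and lim: "((\<lambda>x. u x - v x) \<longlongrightarrow> 0) at_bot"
    and decreasing: "\<And>x. x \<le> a \<Longrightarrow> u x > v x \<Longrightarrow> g (u x) < g (v x)"
    and "x \<le> a"
  shows "u x \<le> v x"
proof -
  have mirror: "\<And>y. ((\<lambda>y. h (- y)) has_real_derivative - h' (- y)) (at y)"
    if "\<And>x. (h has_real_derivative h' x) (at x)" for h h' :: "real \<Rightarrow> real"
    using that DERIV_mirror by (metis minus_minus)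
  have "u (- (- x)) \<le> v (- (- x))"
  proof (rule comparison_right[where u = "\<lambda>y. u (- y)" and u' = "\<lambda>y. - u' (- y)"
        and u'' = "\<lambda>y. u'' (- y)" and v = "\<lambda>y. v (- y)" and v' = "\<lambda>y. - v' (- y)"
        and v'' = "\<lambda>y. v'' (- y)" and c = "- c" and g = g and a = "- a"])
    show "((\<lambda>y. - u' (- y)) has_real_derivative u'' (- y)) (at y)"
      "((\<lambda>y. - v' (- y)) has_real_derivative v'' (- y)) (at y)" for y
      using mirror[of u' u''] mirror[of v' v''] Du(2) Dv(2) DERIV_minus by fastforce+
    show "((\<lambda>x. u (- x) - v (- x)) \<longlongrightarrow> 0) at_top"
      using lim by (simp add: filterlim_at_bot_mirror)
  qed (use mirror Du Dv sub sol start decreasing \<open>x \<le> a\<close> in auto)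
  then show ?thesis by simp
qed

text \<open>Gronwall: \<open>E e\<^sup>-\<^sup>K\<^sup>x\<close> decreases and \<open>E e\<^sup>K\<^sup>x\<close> increases.\<close>

lemma vanishing_of_self_bounded_derivative:
  fixes E E' :: "real \<Rightarrow> real"
  assumes DE: "\<And>x. (E has_real_derivative E' x) (at x)"
    and bound: "\<And>x. \<bar>E' x\<bar> \<le> K * E x" and nonneg: "\<And>x. E x \<ge> 0" and zero: "E a = 0"
  shows "E x = 0"
proof -
  have "E x \<le> 0"
  proof (cases "a \<le> x")
    case True
    have "- (E a * exp (- K * a)) \<le> - (E x * exp (- K * x))"
    proof (rule DERIV_nonneg_imp_nondecreasing[of a x "\<lambda>x. - (E x * exp (- K * x))", OF True])
      fix y
      have "E' y * exp (- K * y) \<le> K * E y * exp (- K * y)"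
        using bound[of y] by (intro mult_right_mono) auto
      then show "\<exists>l. ((\<lambda>x. - (E x * exp (- K * x))) has_real_derivative l) (at y) \<and> l \<ge> 0"
        by (auto intro!: derivative_eq_intros DE simp: algebra_simps)
    qed
    then show ?thesis using zero by (simp add: mult_le_0_iff)
  next
    case False
    have "E x * exp (K * x) \<le> E a * exp (K * a)"
    proof (rule DERIV_nonneg_imp_nondecreasing[of x a "\<lambda>x. E x * exp (K * x)"])
      fix y
      have "- K * E y * exp (K * y) \<le> E' y * exp (K * y)"
        using bound[of y] by (intro mult_right_mono) auto
      then show "\<exists>l. ((\<lambda>x. E x * exp (K * x)) has_real_derivative l) (at y) \<and> l \<ge> 0"
        by (auto intro!: derivative_eq_intros DE simp: algebra_simps)
    qed (use False in simp)
    then show ?thesis using zero by (simp add: mult_le_0_iff)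
  qed
  with nonneg[of x] show ?thesis by simp
qed

text \<open>The energy \<open>(v - e)\<^sup>2 + v'\<^sup>2\<close> satisfies \<open>|E'| \<le> K E\<close> by the Lipschitz bound.\<close>

lemma equilibrium_solution_constant:
  fixes v v' v'' g :: "real \<Rightarrow> real"
  assumes Dv: "\<And>x. (v has_real_derivative v' x) (at x)" "\<And>x. (v' has_real_derivative v'' x) (at x)"
    and sol: "\<And>x. v'' x + c * v' x + g (v x) = 0"
    and lip: "L-lipschitz_on S g" and range: "\<And>x. v x \<in> S"
    and crit: "v' x0 = 0" and equilibrium: "g (v x0) = 0"
  shows "v x = v x0"
proof -
  define e where "e = v x0"
  define E where "E = (\<lambda>x. (v x - e)\<^sup>2 + (v' x)\<^sup>2)"
  define K where "K = 1 + L + 2 * \<bar>c\<bar>"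
  have L: "L \<ge> 0" using lip lipschitz_on_nonneg by blast
  have "E x = 0"
  proof (rule vanishing_of_self_bounded_derivative[where E = E and K = K and a = x0
        and E' = "\<lambda>x. 2 * (v x - e) * v' x + 2 * v' x * v'' x"])
    show "(E has_real_derivative 2 * (v x - e) * v' x + 2 * v' x * v'' x) (at x)" for x
      unfolding E_def using Dv by (auto intro!: derivative_eq_intros)
    fix x
    define a b where "a = v x - e" and "b = v' x"
    have gdiff: "\<bar>g (v x)\<bar> \<le> L * \<bar>a\<bar>"
      using lipschitz_onD[OF lip range range, of x x0] equilibrium by (simp add: a_def e_def dist_real_def)
    have ab: "2 * \<bar>a\<bar> * \<bar>b\<bar> \<le> a\<^sup>2 + b\<^sup>2"
      using sum_squares_bound[of "\<bar>a\<bar>" "\<bar>b\<bar>"] by simp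
    have "v'' x = - c * b - g (v x)"
      using sol[of x] unfolding b_def by linarith
    then have "\<bar>2 * a * b + 2 * b * v'' x\<bar> = \<bar>2 * a * b - 2 * c * b\<^sup>2 - 2 * b * g (v x)\<bar>"
      unfolding power2_eq_square by (simp only:) (simp add: algebra_simps)
    also have "\<dots> \<le> 2 * \<bar>a\<bar> * \<bar>b\<bar> + 2 * \<bar>c\<bar> * b\<^sup>2 + 2 * \<bar>b\<bar> * (L * \<bar>a\<bar>)"
      using gdiff by (simp add: abs_mult power2_eq_square mult_left_mono abs_triangle_ineq4
          order_trans[OF abs_triangle_ineq4] add_mono)
    also have "\<dots> \<le> (a\<^sup>2 + b\<^sup>2) + 2 * \<bar>c\<bar> * (a\<^sup>2 + b\<^sup>2) + L * (a\<^sup>2 + b\<^sup>2)"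
    proof -
      have "2 * \<bar>c\<bar> * b\<^sup>2 \<le> 2 * \<bar>c\<bar> * (a\<^sup>2 + b\<^sup>2)" by (simp add: mult_left_mono)
      moreover have "2 * \<bar>b\<bar> * (L * \<bar>a\<bar>) \<le> L * (a\<^sup>2 + b\<^sup>2)"
        using mult_left_mono[OF ab L] by (simp add: algebra_simps)
      ultimately show ?thesis using ab by linarith
    qed
    finally show "\<bar>2 * (v x - e) * v' x + 2 * v' x * v'' x\<bar> \<le> K * E x"
      by (simp add: K_def E_def a_def b_def algebra_simps)
  qed (use crit in \<open>auto simp: E_def e_def\<close>)
  then show ?thesis by (simp add: E_def e_def add_nonneg_eq_0_iff)
qed

lemma strict_antimono_near_negative_derivative:
  fixes g g' :: "real \<Rightarrow> real"
  assumes D: "\<And>x. x \<in> S \<Longrightarrow> (g has_real_derivative g' x) (at x within S)"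
    and S: "convex S" and cont: "continuous_on S g'" and "a \<in> S" and neg: "g' a < 0"
  obtains r where "r > 0"
    "\<And>x y. x \<in> S \<Longrightarrow> y \<in> S \<Longrightarrow> \<bar>x - a\<bar> < r \<Longrightarrow> \<bar>y - a\<bar> < r \<Longrightarrow> x < y \<Longrightarrow> g y < g x"
proof -
  obtain r where "r > 0" and r: "\<And>x. x \<in> S \<Longrightarrow> dist x a < r \<Longrightarrow> dist (g' x) (g' a) < - g' a"
    using cont \<open>a \<in> S\<close> neg unfolding continuous_on_iff by (metis neg_0_less_iff_less)
  show thesis
  proof (rule that[OF \<open>r > 0\<close>])
    fix x y assume xy: "x \<in> S" "y \<in> S" "\<bar>x - a\<bar> < r" "\<bar>y - a\<bar> < r" "x < y"
    have sub: "{x..y} \<subseteq> S"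
      using convex_contains_segment[of S] closed_segment_eq_real_ivl[of x y] xy S by auto
    obtain z where z: "z \<in> {x<..<y}" "g y - g x = g' z * (y - x)"
      using mvt_simple[of x y g "\<lambda>z. (*) (g' z)"] xy(5) sub
        has_field_derivative_subset[OF D sub] has_field_derivative_imp_has_derivative
      by (metis atLeastAtMost_iff subsetD)
    have "z \<in> S" "\<bar>z - a\<bar> < r" using z sub xy by (auto simp: abs_less_iff)
    then have "g' z < 0" using r[of z] by (auto simp: dist_real_def abs_less_iff)
    then have "g' z * (y - x) < 0" using xy(5) by (simp add: mult_neg_pos)
    then show "g y < g x" using z by simp
  qed
qed

lemma continuous_derivative_imp_lipschitz:
  fixes g g' :: "real \<Rightarrow> real"
  assumes D: "\<And>x. x \<in> S \<Longrightarrow> (g has_real_derivative g' x) (at x within S)"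
    and "compact S" and "convex S" and "continuous_on S g'"
  obtains L where "L-lipschitz_on S g"
proof -
  have "bounded (g' ` S)" using assms by (simp add: compact_continuous_image compact_imp_bounded)
  then obtain B where "B > 0" and B: "\<And>x. x \<in> S \<Longrightarrow> \<bar>g' x\<bar> \<le> B"
    unfolding bounded_pos by auto
  have "B-lipschitz_on S g"
    using field_differentiable_bound[OF \<open>convex S\<close> D] B \<open>B > 0\<close>
    by (intro lipschitz_onI) (auto simp: dist_real_def)
  then show thesis by (rule that)
qed

lemma decreasing_near_endpoints:
  fixes g g' :: "real \<Rightarrow> real"
  assumes D: "\<And>x. x \<in> {0..1} \<Longrightarrow> (g has_real_derivative g' x) (at x within {0..1})"
    and cont: "continuous_on {0..1} g'" and "g' 0 < 0" and "g' 1 < 0"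
  obtains \<delta> where "0 < \<delta>" "\<delta> \<le> 1/2"
    "\<And>x y. 0 \<le> x \<Longrightarrow> x < y \<Longrightarrow> y \<le> \<delta> \<Longrightarrow> g y < g x"
    "\<And>x y. 1 - \<delta> \<le> x \<Longrightarrow> x < y \<Longrightarrow> y \<le> 1 \<Longrightarrow> g y < g x"
proof -
  obtain r0 where "r0 > 0" and r0: "\<And>x y. x \<in> {0..1} \<Longrightarrow> y \<in> {0..1} \<Longrightarrow> \<bar>x\<bar> < r0 \<Longrightarrow>
      \<bar>y\<bar> < r0 \<Longrightarrow> x < y \<Longrightarrow> g y < g x"
    using strict_antimono_near_negative_derivative[OF D _ cont, of 0] \<open>g' 0 < 0\<close> by auto
  obtain r1 where "r1 > 0" and r1: "\<And>x y. x \<in> {0..1} \<Longrightarrow> y \<in> {0..1} \<Longrightarrow> \<bar>x - 1\<bar> < r1 \<Longrightarrow>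
      \<bar>y - 1\<bar> < r1 \<Longrightarrow> x < y \<Longrightarrow> g y < g x"
    using strict_antimono_near_negative_derivative[OF D _ cont, of 1] \<open>g' 1 < 0\<close> by auto
  show thesis
  proof (rule that[of "min (min r0 r1) 1 / 2"])
    fix x y :: real
    show "0 \<le> x \<Longrightarrow> x < y \<Longrightarrow> y \<le> min (min r0 r1) 1 / 2 \<Longrightarrow> g y < g x"
      using r0[of x y] \<open>r0 > 0\<close> by auto
    show "1 - min (min r0 r1) 1 / 2 \<le> x \<Longrightarrow> x < y \<Longrightarrow> y \<le> 1 \<Longrightarrow> g y < g x"
      using r1[of x y] \<open>r1 > 0\<close> by auto
  qed (use \<open>r0 > 0\<close> \<open>r1 > 0\<close> in auto)
qed

lemma derivative_le_at_touching_right_endpoint: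
  fixes f h :: "real \<Rightarrow> real"
  assumes Df: "(f has_real_derivative f') (at b within {a..b})"
    and Dh: "(h has_real_derivative h') (at b within {a..b})"
    and "a < b" and below: "\<And>x. a \<le> x \<Longrightarrow> x \<le> b \<Longrightarrow> h x \<le> f x" and touch: "h b = f b"
  shows "f' \<le> h'"
proof (rule ccontr)
  assume "\<not> f' \<le> h'"
  then obtain d where "d > 0" and d: "\<And>t. t > 0 \<Longrightarrow> b - t \<in> {a..b} \<Longrightarrow> t < d \<Longrightarrow>
      f (b - t) - h (b - t) < f b - h b"
    using has_real_derivative_pos_inc_left[OF DERIV_diff[OF Df Dh]] by auto
  define t where "t = min d (b - a) / 2"
  have "t > 0" "t < d" "b - t \<in> {a..b}" using \<open>d > 0\<close> \<open>a < b\<close> by (auto simp: t_def min_def field_simps)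
  with d below[of "b - t"] touch show False by fastforce
qed

definition reaction :: "(real \<Rightarrow> real) \<Rightarrow> real \<Rightarrow> real" where
  "reaction f0 u = u * (1 - u - f0 u)"

lemma reaction_bistable:
  fixes f0 f0' :: "real \<Rightarrow> real"
  assumes D: "\<And>x. x \<in> {0..1} \<Longrightarrow> (f0 has_real_derivative f0' x) (at x within {0..1})"
    and cont: "continuous_on {0..1} f0'" and "f0 0 > 1" and "f0 1 = 0" and "f0' 1 > -1"
  obtains \<delta> L where "0 < \<delta>" "\<delta> \<le> 1/2"
    "\<And>x y. 0 \<le> x \<Longrightarrow> x < y \<Longrightarrow> y \<le> \<delta> \<Longrightarrow> reaction f0 y < reaction f0 x"
    "\<And>x y. 1 - \<delta> \<le> x \<Longrightarrow> x < y \<Longrightarrow> y \<le> 1 \<Longrightarrow> reaction f0 y < reaction f0 x"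
    "L-lipschitz_on {0..1} (reaction f0)"
proof -
  define g' where "g' u = 1 - 2 * u - f0 u - u * f0' u" for u
  have Dg: "(reaction f0 has_real_derivative g' x) (at x within {0..1})" if "x \<in> {0..1}" for x
    unfolding reaction_def[abs_def] g'_def using D[OF that]
    by (auto intro!: derivative_eq_intros simp: algebra_simps)
  have "continuous_on {0..1} g'"
    unfolding g'_def using DERIV_continuous_on[OF D] cont by (intro continuous_intros)
  moreover have "g' 0 < 0" "g' 1 < 0" using assms(3-5) by (auto simp: g'_def)
  ultimately show thesis
    using decreasing_near_endpoints[OF Dg] continuous_derivative_imp_lipschitz[OF Dg] that
    by (metis compact_Icc convex_real_interval(5))
qed

lemma C2_real_has_derivatives:
  assumes "C2_real w"
  shows "(w has_real_derivative deriv w x) (at x)"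
    and "(deriv w has_real_derivative deriv (deriv w) x) (at x)"
  using assms unfolding C2_real_def differentiable_on_def
  by (auto simp: DERIV_deriv_iff_real_differentiable)

lemma antimono_between_limits:
  fixes w :: "real \<Rightarrow> real"
  assumes "antimono w" and "(w \<longlongrightarrow> 1) at_bot" and "(w \<longlongrightarrow> 0) at_top"
  shows "w x \<in> {0..1}"
proof -
  have "\<forall>\<^sub>F y in at_top. w y \<le> w x" "\<forall>\<^sub>F y in at_bot. w x \<le> w y"
    using \<open>antimono w\<close> unfolding antimono_def eventually_at_top_linorder eventually_at_bot_linorder
    by blast+
  then show ?thesis
    using tendsto_upperbound[OF assms(3)] tendsto_lowerbound[OF assms(2)] by auto
qed

lemma delayed_solution_is_subsolution:
  fixes f f0 w w' w'' :: "real \<Rightarrow> real"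
  assumes f0_antimono: "\<And>x y. 0 \<le> x \<Longrightarrow> x \<le> y \<Longrightarrow> y \<le> 1 \<Longrightarrow> f0 y \<le> f0 x"
    and f0_le_f: "\<And>u. 0 \<le> u \<Longrightarrow> u \<le> 1 \<Longrightarrow> f0 u \<le> f u"
    and "0 \<le> h" and "antimono w" and range: "\<And>x. w x \<in> {0..1}"
    and eq: "w'' x + c * w' x + w x * (1 - w x - f (w (x + h))) = 0"
  shows "w'' x + c * w' x + reaction f0 (w x) \<ge> 0"
proof -
  have "w (x + h) \<le> w x" using \<open>antimono w\<close> \<open>0 \<le> h\<close> by (simp add: antimono_def)
  then have "f0 (w x) \<le> f0 (w (x + h))" using f0_antimono range by auto
  also have "\<dots> \<le> f (w (x + h))" using f0_le_f range by auto
  finally have "0 \<le> w x * (f (w (x + h)) - f0 (w x))" using range[of x] by simp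
  then show ?thesis using eq by (simp add: reaction_def algebra_simps)
qed

locale bistable_wave =
  fixes g :: "real \<Rightarrow> real" and \<delta> L c0 :: real and v v' v'' :: "real \<Rightarrow> real"
  assumes g_lipschitz: "L-lipschitz_on {0..1} g"
    and \<delta>: "0 < \<delta>" "\<delta> \<le> 1/2"
    and g_decreasing_near_0: "\<And>x y. 0 \<le> x \<Longrightarrow> x < y \<Longrightarrow> y \<le> \<delta> \<Longrightarrow> g y < g x"
    and g_decreasing_near_1: "\<And>x y. 1 - \<delta> \<le> x \<Longrightarrow> x < y \<Longrightarrow> y \<le> 1 \<Longrightarrow> g y < g x"
    and v_has_derivative: "\<And>x. (v has_real_derivative v' x) (at x)"
    and v'_has_derivative: "\<And>x. (v' has_real_derivative v'' x) (at x)"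
    and wave_equation: "\<And>x. v'' x + c0 * v' x + g (v x) = 0"
    and v_range: "\<And>x. v x \<in> {0..1}"
    and v_at_bot: "(v \<longlongrightarrow> 1) at_bot" and v_at_top: "(v \<longlongrightarrow> 0) at_top"
begin

lemma no_critical_equilibrium:
  assumes "v' x0 = 0" and "g (v x0) = 0"
  shows False
proof -
  have "v = (\<lambda>_. v x0)"
    using equilibrium_solution_constant[OF v_has_derivative v'_has_derivative wave_equation
        g_lipschitz v_range assms] by blast
  then have "((\<lambda>_::real. v x0) \<longlongrightarrow> 1) at_bot" "((\<lambda>_::real. v x0) \<longlongrightarrow> 0) at_top"
    using v_at_bot v_at_top by simp_all
  then show False by (simp add: tendsto_const_iff)
qed

end

locale antitone_subsolution = bistable_wave +
  fixes c :: real and w w' w'' :: "real \<Rightarrow> real"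
  assumes w_has_derivative: "\<And>x. (w has_real_derivative w' x) (at x)"
    and w'_has_derivative: "\<And>x. (w' has_real_derivative w'' x) (at x)"
    and subsolution: "\<And>x. w'' x + c * w' x + g (w x) \<ge> 0"
    and w_antimono: "antimono w"
    and w_at_bot: "(w \<longlongrightarrow> 1) at_bot" and w_at_top: "(w \<longlongrightarrow> 0) at_top"
begin

lemma w_range: "w x \<in> {0..1}"
  using antimono_between_limits[OF w_antimono w_at_bot w_at_top] .

lemma w'_nonpos: "w' x \<le> 0"
proof -
  have "mono_on UNIV (\<lambda>x. - w x)" using w_antimono by (auto simp: antimono_def mono_on_def)
  then have "0 \<le> - w' x"
    using mono_on_imp_deriv_nonneg[OF _ DERIV_minus[OF w_has_derivative]] by simp
  then show ?thesis by simp
qed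

lemma subsolution_slower:
  assumes "c0 \<le> c"
  shows "w'' x + c0 * w' x + g (w x) \<ge> 0"
proof -
  have "(c - c0) * w' x \<le> 0" using assms w'_nonpos by (simp add: mult_nonneg_nonpos)
  then show ?thesis using subsolution[of x] by (simp add: algebra_simps)
qed

lemma shifted_has_derivatives:
  "((\<lambda>x. w (x + s)) has_real_derivative w' (x + s)) (at x)"
  "((\<lambda>x. w' (x + s)) has_real_derivative w'' (x + s)) (at x)"
  using w_has_derivative w'_has_derivative DERIV_shift by blast+

lemma shifted_limits:
  "((\<lambda>x. w (x + s)) \<longlongrightarrow> 1) at_bot" "((\<lambda>x. w (x + s)) \<longlongrightarrow> 0) at_top"
proof -
  have "\<exists>N. \<forall>x\<le>N. x + s \<le> Z" "\<exists>N. \<forall>x\<ge>N. Z \<le> x + s" for Z :: real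
    by (auto intro!: exI[of _ "Z - s"])
  then have "filterlim (\<lambda>x. x + s) at_bot at_bot" "filterlim (\<lambda>x. x + s) at_top (at_top :: real filter)"
    unfolding filterlim_at_bot filterlim_at_top eventually_at_bot_linorder eventually_at_top_linorder
    by blast+
  then show "((\<lambda>x. w (x + s)) \<longlongrightarrow> 1) at_bot" "((\<lambda>x. w (x + s)) \<longlongrightarrow> 0) at_top"
    using filterlim_compose w_at_bot w_at_top by blast+
qed

definition below_shifts :: "real set" where
  "below_shifts = {s. \<forall>x. w (x + s) \<le> v x}"

text \<open>Outside \<open>[a, b]\<close> the graphs only meet where \<open>g\<close> is decreasing, so the maximum
  principle extends the order from \<open>[a, b]\<close> to the whole line.\<close>

lemma below_shifts_if_below_between:
  assumes "c0 \<le> c" and "a \<le> b"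
    and between: "\<And>x. a \<le> x \<Longrightarrow> x \<le> b \<Longrightarrow> w (x + s) \<le> v x"
    and right: "\<And>x. b \<le> x \<Longrightarrow> w (x + s) \<le> \<delta>"
    and left: "\<And>x. x \<le> a \<Longrightarrow> 1 - \<delta> \<le> v x"
  shows "s \<in> below_shifts"
  unfolding below_shifts_def
proof (intro CollectI allI)
  fix x
  note comparison = shifted_has_derivatives v_has_derivative v'_has_derivative
    subsolution_slower[OF \<open>c0 \<le> c\<close>] wave_equation
  consider "x \<le> a" | "b \<le> x" | "a \<le> x" "x \<le> b" by linarith
  then show "w (x + s) \<le> v x"
  proof cases
    case 1
    show ?thesis
    proof (rule comparison_left[OF comparison _ _ _ 1])
      show "((\<lambda>x. w (x + s) - v x) \<longlongrightarrow> 0) at_bot"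
        using tendsto_diff[OF shifted_limits(1) v_at_bot] by simp
      show "g (w (y + s)) < g (v y)" if "y \<le> a" "v y < w (y + s)" for y
        using g_decreasing_near_1 left[of y] w_range[of "y + s"] that by auto
    qed (use between \<open>a \<le> b\<close> in auto)
  next
    case 2
    show ?thesis
    proof (rule comparison_right[OF comparison _ _ _ 2])
      show "((\<lambda>x. w (x + s) - v x) \<longlongrightarrow> 0) at_top"
        using tendsto_diff[OF shifted_limits(2) v_at_top] by simp
      show "g (w (y + s)) < g (v y)" if "b \<le> y" "v y < w (y + s)" for y
        using g_decreasing_near_0 right[of y] v_range[of y] that by auto
    qed (use between \<open>a \<le> b\<close> in auto)
  qed (rule between)
qed

lemma w_eventually_small: obtains A where "\<And>x. A \<le> x \<Longrightarrow> w x \<le> \<delta>"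
proof -
  have "\<forall>\<^sub>F x in at_top. w x < \<delta>" using order_tendstoD(2)[OF w_at_top \<delta>(1)] .
  then show thesis using that unfolding eventually_at_top_linorder by (meson less_imp_le)
qed

lemma v_eventually_large: obtains B where "\<And>x. x \<le> B \<Longrightarrow> 1 - \<delta> \<le> v x"
proof -
  have "\<forall>\<^sub>F x in at_bot. 1 - \<delta> < v x" using order_tendstoD(1)[OF v_at_bot] \<delta>(1) by simp
  then show thesis using that unfolding eventually_at_bot_linorder by (meson less_imp_le)
qed

lemma below_shifts_nonempty:
  assumes "c0 \<le> c"
  shows "below_shifts \<noteq> {}"
proof -
  obtain A where A: "\<And>x. A \<le> x \<Longrightarrow> w x \<le> \<delta>" using w_eventually_small by blast
  obtain B where B: "\<And>x. x \<le> B \<Longrightarrow> 1 - \<delta> \<le> v x" using v_eventually_large by blast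
  have "A - B \<in> below_shifts"
  proof (rule below_shifts_if_below_between[OF assms order_refl])
    show "w (x + (A - B)) \<le> v x" if "B \<le> x" "x \<le> B" for x
      using that A[of A] B[of B] \<delta>(2) by simp
  qed (use A B in auto)
  then show ?thesis by blast
qed

lemma below_shifts_bdd_below: "bdd_below below_shifts"
proof -
  have "\<forall>\<^sub>F x in at_top. v x < 1/2" "\<forall>\<^sub>F x in at_bot. 1/2 < w x"
    using order_tendstoD(2)[OF v_at_top, of "1/2"] order_tendstoD(1)[OF w_at_bot, of "1/2"] by auto
  then obtain x1 y1 where x1: "v x1 < 1/2" and y1: "1/2 < w y1"
    unfolding eventually_at_top_linorder eventually_at_bot_linorder by blast
  have "y1 - x1 \<le> s" if "s \<in> below_shifts" for s
  proof (rule ccontr)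
    assume "\<not> y1 - x1 \<le> s"
    then have "w y1 \<le> w (x1 + s)" using w_antimono by (simp add: antimono_def)
    also have "\<dots> \<le> v x1" using that by (simp add: below_shifts_def)
    finally show False using x1 y1 by simp
  qed
  then show ?thesis by (rule bdd_belowI)
qed

lemma continuous_on_v_w_shift:
  "continuous_on S v" "continuous_on S (\<lambda>x. w (x + s))"
proof -
  have "continuous_on UNIV w" "continuous_on UNIV v"
    using w_has_derivative v_has_derivative by (meson DERIV_isCont continuous_at_imp_continuous_on)+
  then show "continuous_on S v" "continuous_on S (\<lambda>x. w (x + s))"
    using continuous_on_subset continuous_on_compose2[OF _ continuous_on_add[OF continuous_on_id
        continuous_on_const]] by blast+
qed

lemma closed_below_shifts: "closed below_shifts"
proof -
  have "closed {s. w (s + x) \<le> v x}" for x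
    using continuous_on_v_w_shift[of UNIV] by (intro closed_Collect_le continuous_intros)
  moreover have "below_shifts = (\<Inter>x. {s. w (s + x) \<le> v x})"
    by (auto simp: below_shifts_def add.commute)
  ultimately show ?thesis by auto
qed

lemma strictly_below_shift_decreasable:
  assumes "c0 \<le> c" and strict: "\<And>x. w (x + s) < v x"
  obtains \<epsilon> where "\<epsilon> > 0" "s - \<epsilon> \<in> below_shifts"
proof -
  obtain A where A: "\<And>x. A \<le> x \<Longrightarrow> w x \<le> \<delta>" using w_eventually_small by blast
  obtain B where B: "\<And>x. x \<le> B \<Longrightarrow> 1 - \<delta> \<le> v x" using v_eventually_large by blast
  define a b where "a = min (A - s + 1) B" and "b = max (A - s + 1) B"
  have "continuous_on {a..b} (\<lambda>x. v x - w (x + s))"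
    using continuous_on_v_w_shift by (intro continuous_intros)
  moreover have "{a..b} \<noteq> {}" by (simp add: a_def b_def)
  ultimately obtain m where m: "\<forall>y\<in>{a..b}. v m - w (m + s) \<le> v y - w (y + s)"
    using continuous_attains_inf[OF compact_Icc] by blast
  define \<eta> where "\<eta> = v m - w (m + s)"
  have "\<eta> > 0" using strict[of m] by (simp add: \<eta>_def)
  have "uniformly_continuous_on {a + s - 1..b + s} w"
    using compact_uniformly_continuous[OF continuous_on_v_w_shift(2)[of _ 0]] by simp
  then obtain d where "d > 0" and d: "\<And>x x'. x \<in> {a + s - 1..b + s} \<Longrightarrow> x' \<in> {a + s - 1..b + s} \<Longrightarrow>
      dist x' x < d \<Longrightarrow> dist (w x') (w x) < \<eta>"
    unfolding uniformly_continuous_on_def using \<open>\<eta> > 0\<close> by blast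
  define \<epsilon> where "\<epsilon> = min (d / 2) 1"
  have \<epsilon>: "0 < \<epsilon>" "\<epsilon> \<le> 1" "\<epsilon> < d" using \<open>d > 0\<close> by (auto simp: \<epsilon>_def)
  have "s - \<epsilon> \<in> below_shifts"
  proof (rule below_shifts_if_below_between[OF \<open>c0 \<le> c\<close>, of a b])
    fix x
    assume x: "a \<le> x" "x \<le> b"
    have "dist (w (x + (s - \<epsilon>))) (w (x + s)) < \<eta>"
      using d[of "x + s" "x + (s - \<epsilon>)"] x \<epsilon> by (auto simp: dist_real_def)
    moreover have "\<eta> \<le> v x - w (x + s)" using m x by (simp add: \<eta>_def)
    ultimately show "w (x + (s - \<epsilon>)) \<le> v x" by (simp add: dist_real_def)
  next
    fix x
    assume "b \<le> x"
    then have "w (x + (s - \<epsilon>)) \<le> w (x + s - 1)" using w_antimono \<epsilon>(2) by (simp add: antimono_def)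
    also have "\<dots> \<le> \<delta>" using A \<open>b \<le> x\<close> by (simp add: b_def)
    finally show "w (x + (s - \<epsilon>)) \<le> \<delta>" .
  qed (use B in \<open>auto simp: a_def b_def\<close>)
  with \<epsilon>(1) show thesis by (rule that)
qed

lemma touching_shift:
  assumes "c0 \<le> c"
  obtains s x0 where "s \<in> below_shifts" "w (x0 + s) = v x0"
proof -
  define s where "s = Inf below_shifts"
  have "s \<in> below_shifts"
    using closed_contains_Inf below_shifts_nonempty[OF assms] below_shifts_bdd_below
      closed_below_shifts by (simp add: s_def)
  moreover have "\<exists>x0. w (x0 + s) = v x0"
  proof (rule ccontr)
    assume "\<nexists>x0. w (x0 + s) = v x0"
    with \<open>s \<in> below_shifts\<close> have "\<And>x. w (x + s) < v x"
      unfolding below_shifts_def by (metis mem_Collect_eq order.not_eq_order_implies_strict)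
    then obtain \<epsilon> where "\<epsilon> > 0" "s - \<epsilon> \<in> below_shifts"
      using strictly_below_shift_decreasable[OF assms] by blast
    then have "s \<le> s - \<epsilon>" by (metis cInf_lower below_shifts_bdd_below s_def)
    with \<open>\<epsilon> > 0\<close> show False by simp
  qed
  ultimately show thesis using that by blast
qed

text \<open>At a contact point the first derivatives agree and \<open>w'' \<le> v''\<close>; with the
  equations this gives \<open>(c - c\<^sub>0) w' \<ge> 0\<close>, so \<open>w' = 0\<close> is a maximum of \<open>w'\<close> and \<open>w'' = 0\<close>,
  which leaves \<open>g(v) = 0\<close> at a critical point of \<open>v\<close>.\<close>

lemma no_touching_shift_if_faster:
  assumes "c0 < c" and "s \<in> below_shifts" and touch: "w (x0 + s) = v x0"
  shows False
proof -
  define y0 where "y0 = x0 + s"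
  have D: "((\<lambda>x. w (x + s) - v x) has_real_derivative w' (x + s) - v' x) (at x)"
    and D': "((\<lambda>x. w' (x + s) - v' x) has_real_derivative w'' (x + s) - v'' x) (at x)" for x
    using DERIV_diff[OF shifted_has_derivatives(1) v_has_derivative]
      DERIV_diff[OF shifted_has_derivatives(2) v'_has_derivative] by auto
  have "w (y + s) - v y \<le> w (x0 + s) - v x0" for y
    using assms(2) touch by (simp add: below_shifts_def)
  then have "w' y0 - v' x0 = 0" "w'' y0 - v'' x0 \<le> 0"
    using DERIV_local_max_second[OF D D' zero_less_one, of x0] by (simp_all add: y0_def)
  then have crit: "v' x0 = w' y0" and second: "w'' y0 \<le> v'' x0" by auto
  have "g (w y0) = g (v x0)" using touch by (simp add: y0_def)
  then have wave: "v'' x0 + c0 * w' y0 + g (w y0) = 0" using wave_equation[of x0] crit by simp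
  then have "c * w' y0 \<ge> c0 * w' y0" using subsolution[of y0] second by linarith
  then have "\<not> w' y0 < 0" using mult_strict_right_mono_neg[OF \<open>c0 < c\<close>, of "w' y0"] by linarith
  then have "w' y0 = 0" using w'_nonpos[of y0] by simp
  moreover have "w'' y0 = 0"
    by (rule DERIV_local_max[OF w'_has_derivative zero_less_one]) (use w'_nonpos \<open>w' y0 = 0\<close> in simp)
  ultimately have "g (v x0) = 0"
    using subsolution[of y0] wave second \<open>g (w y0) = g (v x0)\<close> by auto
  with crit \<open>w' y0 = 0\<close> show False using no_critical_equilibrium by auto
qed

theorem speed_le: "c \<le> c0"
proof (rule ccontr)
  assume "\<not> c \<le> c0"
  then have "c0 < c" by simp
  obtain s x0 where "s \<in> below_shifts" "w (x0 + s) = v x0"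
    using touching_shift[OF less_imp_le[OF \<open>c0 < c\<close>]] by blast
  then show False by (rule no_touching_shift_if_faster[OF \<open>c0 < c\<close>])
qed

end

theorem lemma4p1:
  fixes f f0 :: "real \<Rightarrow> real" and c0 \<tau> c :: real and w :: "real \<Rightarrow> real"
  assumes "C4_bounded_derivs f" and "F1 f" and "F2 f" and "F3 f"
    and "C1_on_unit f0"
    and "\<forall>x y. 0 \<le> x \<and> x \<le> y \<and> y \<le> 1 \<longrightarrow> f0 y \<le> f0 x"
    and "\<forall>x. 0 \<le> x \<and> x \<le> 1 \<longrightarrow> f0 x \<le> f x"
    and "f0 0 > 1" and "f0 1 = 0"
    and "\<exists>!u. 0 < u \<and> u < 1 \<and> 1 - u = f0 u"
    and "\<exists>v. solves_nondelayed f0 c0 v"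
    and "\<forall>c' v. solves_nondelayed f0 c' v \<longrightarrow> c' = c0"
    and "\<tau> \<ge> 0" and "c > 0"
    and "solves_P f \<tau> c w"
    and "\<forall>x y. x \<le> y \<longrightarrow> w y \<le> w x"
  shows "c \<le> c0"
proof -
  obtain f0' where D0: "\<And>x. x \<in> {0..1} \<Longrightarrow> (f0 has_real_derivative f0' x) (at x within {0..1})"
    and "continuous_on {0..1} f0'"
    using assms(5) unfolding C1_on_unit_def by blast
  have "(f has_real_derivative deriv f 1) (at 1 within {0..1})"
    using assms(1) unfolding C4_bounded_derivs_def differentiable_on_def
    by (metis DERIV_deriv_iff_real_differentiable funpow_0 has_field_derivative_at_within
        iso_tuple_UNIV_I zero_less_numeral)
  then have "deriv f 1 \<le> f0' 1"
    using derivative_le_at_touching_right_endpoint[OF _ D0] assms(2,7,9) by (simp add: F1_def)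
  then have "f0' 1 > -1" using assms(2) unfolding F1_def by linarith
  then obtain \<delta> L where "0 < \<delta>" "\<delta> \<le> 1/2"
    "\<And>x y. 0 \<le> x \<Longrightarrow> x < y \<Longrightarrow> y \<le> \<delta> \<Longrightarrow> reaction f0 y < reaction f0 x"
    "\<And>x y. 1 - \<delta> \<le> x \<Longrightarrow> x < y \<Longrightarrow> y \<le> 1 \<Longrightarrow> reaction f0 y < reaction f0 x"
    "L-lipschitz_on {0..1} (reaction f0)"
    using reaction_bistable[OF D0 \<open>continuous_on {0..1} f0'\<close> assms(8,9)] by blast
  moreover obtain v where "solves_nondelayed f0 c0 v" using assms(11) by blast
  moreover have "antimono w" using assms(16) by (simp add: antimono_def)
  moreover have "deriv (deriv w) x + c * deriv w x + reaction f0 (w x) \<ge> 0" for x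
    using assms(6,7,13-15) \<open>antimono w\<close> antimono_between_limits[OF \<open>antimono w\<close>]
    by (intro delayed_solution_is_subsolution[where f = f and h = "c * \<tau>" and w = w])
      (auto simp: solves_P_def)
  ultimately interpret antitone_subsolution "reaction f0" \<delta> L c0 v "deriv v" "deriv (deriv v)"
    c w "deriv w" "deriv (deriv w)"
    using assms(15) by unfold_locales (auto simp: solves_nondelayed_def solves_P_def reaction_def
        C2_real_has_derivatives)
  show ?thesis by (rule speed_le)
qed

end
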